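(* Let $\mathcal{X}\subset\mathbb{R}^d$ be nonempty, closed, convex and compact with diameter $D:=\max_{x,y\in\mathcal{X}}\|x-y\|$. Let $\Phi:\mathcal{X}\to\mathbb{R}$ be differentiable with $L$-Lipschitz gradient, and set $G:=\max_{x\in\mathcal{X}}\|\nabla\Phi(x)\|$, $\Phi_{\max}:=\max_{\mathcal{X}}\Phi$, $\Phi_{\min}:=\min_{\mathcal{X}}\Phi$. Let $F(x)=-\nabla\Phi(x)+R(x)$ on $\mathcal{X}$. Let $0<\eta\le 1/L$ and run $x_{t+1}=\operatorname{Proj}_{\mathcal{X}}(x_t+\eta\nabla\Phi(x_t))$, $t=0,\dots,T-1$, from $x_0\in\mathcal{X}$. Let $\tilde t$ be uniformly distributed on $\{0,\dots,T-1\}$, independent of the iterates, and output $\tilde x_T:=x_{\tilde t}$; assume $R$ is square-integrable under the law of $\tilde x_T$ and define $E_T:=(\mathbb{E}[\|R(\tilde x_T)\|^2])^{1/2}$. Then $$\mathbb{E}[\operatorname{Gap}(\tilde x_T)]\le (D+\eta G)\sqrt{\frac{2(\Phi_{\max}-\Phi_{\min})}{T\eta}}+DE_T.$$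
   Context: For $\bar x\in\mathcal{X}$, the duality gap of $F$ is $\operatorname{Gap}(\bar x):=\max_{x\in\mathcal{X}}\langle F(\bar x),\bar x-x\rangle$ with the Euclidean inner product. $\operatorname{Proj}_{\mathcal{X}}$ is Euclidean projection onto $\mathcal{X}$. *)

theory Defs
  imports "HOL-Analysis.Analysis" "HOL-Probability.Probability"
begin

definition gap :: "('a::euclidean_space \<Rightarrow> 'a) \<Rightarrow> 'a set \<Rightarrow> 'a \<Rightarrow> real" where
  "gap F X xb = (SUP x\<in>X. F xb \<bullet> (xb - x))"

end

theory Submission
  imports Defs
begin

text \<open>With \<open>\<eta> * L \<le> 1\<close>, the quadratic lower bound for functions with \<open>L\<close>-Lipschitz
  gradient, combined with the obtuse-angle property of the projection, shows that each step
  raises \<open>\<Phi>\<close> by at least \<open>\<parallel>x (t+1) - x t\<parallel>\<^sup>2 / (2 * \<eta>)\<close>. Telescoping bounds the sum of the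
  squared step lengths by \<open>2 * \<eta> * (\<Phi>max - \<Phi>min)\<close>. The same projection property, tested
  against an arbitrary \<open>z \<in> X\<close>, bounds the gap at \<open>x t\<close> by
  \<open>(D + \<eta> * G) / \<eta> * \<parallel>x (t+1) - x t\<parallel> + D * \<parallel>R (x t)\<parallel>\<close>, and averaging over \<open>t\<close> with the
  Cauchy-Schwarz inequality gives the claim.\<close>

lemma has_real_derivative_along_segment:
  fixes \<Phi> :: "'a::real_inner \<Rightarrow> real"
  assumes "convex X" and "a \<in> X" and "b \<in> X" and "s \<in> {0..1}"
    and deriv: "\<And>y. y \<in> X \<Longrightarrow> (\<Phi> has_derivative (\<lambda>h. g y \<bullet> h)) (at y within X)"
  shows "((\<lambda>s. \<Phi> (a + s *\<^sub>R (b - a))) has_real_derivative g (a + s *\<^sub>R (b - a)) \<bullet> (b - a))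
           (at s within {0..1})"
proof -
  have segment_in: "(\<lambda>s. a + s *\<^sub>R (b - a)) ` {0..1} \<subseteq> X"
    using assms(1-3) by (auto simp: convex_alt algebra_simps)
  then have "a + s *\<^sub>R (b - a) \<in> X"
    using assms(4) by blast
  moreover have "((\<lambda>s. a + s *\<^sub>R (b - a)) has_derivative (\<lambda>h. h *\<^sub>R (b - a))) (at s within {0..1})"
    by (auto intro!: derivative_eq_intros)
  ultimately show ?thesis
    using diff_chain_within has_derivative_subset[OF deriv segment_in]
    by (fastforce simp: o_def has_field_derivative_def mult_commute_abs)
qed

lemma lipschitz_gradient_lower_bound:
  fixes \<Phi> :: "'a::real_inner \<Rightarrow> real"
  assumes "convex X" and "a \<in> X" and "b \<in> X" and "0 \<le> L"
    and deriv: "\<And>y. y \<in> X \<Longrightarrow> (\<Phi> has_derivative (\<lambda>h. g y \<bullet> h)) (at y within X)"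
    and lip: "\<And>y z. y \<in> X \<Longrightarrow> z \<in> X \<Longrightarrow> norm (g y - g z) \<le> L * norm (y - z)"
  shows "\<Phi> a + g a \<bullet> (b - a) - L / 2 * (norm (b - a))\<^sup>2 \<le> \<Phi> b"
proof -
  define d where "d = b - a"
  define k where "k s = \<Phi> (a + s *\<^sub>R d) - s * (g a \<bullet> d) + L / 2 * s\<^sup>2 * (norm d)\<^sup>2" for s
  define k' where "k' s = (g (a + s *\<^sub>R d) - g a) \<bullet> d + L * s * (norm d)\<^sup>2" for s
  have k_deriv: "(k has_real_derivative k' s) (at s within {0..1})" if "s \<in> {0..1}" for s
    unfolding k_def k'_def d_def inner_diff_left
    by (auto intro!: derivative_eq_intros
        has_real_derivative_along_segment[OF assms(1-3) that deriv, THEN DERIV_cong])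
  have k'_nonneg: "0 \<le> k' s" if "s \<in> {0..1}" for s
  proof -
    have "a + s *\<^sub>R d \<in> X"
      using convexD_alt[OF assms(1-3)] that by (simp add: d_def algebra_simps)
    have "- ((g (a + s *\<^sub>R d) - g a) \<bullet> d) \<le> norm (g (a + s *\<^sub>R d) - g a) * norm d"
      using Cauchy_Schwarz_ineq2 abs_le_D2 by blast
    also have "\<dots> \<le> L * norm (s *\<^sub>R d) * norm d"
      using lip[OF \<open>a + s *\<^sub>R d \<in> X\<close> assms(2)] by (intro mult_right_mono) auto
    finally show ?thesis
      using that by (simp add: k'_def power2_eq_square)
  qed
  have "k 0 \<le> k 1"
  proof (rule DERIV_nonneg_imp_increasing_open[of 0 1 k])
    fix s :: real assume "0 < s" "s < 1"
    then show "\<exists>y. (k has_real_derivative y) (at s) \<and> 0 \<le> y"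
      using k_deriv[of s] k'_nonneg[of s] at_within_interior[of s "{0..1}"] by auto
  next
    show "continuous_on {0..1} k"
      using k_deriv by (meson DERIV_continuous continuous_on_eq_continuous_within)
  qed simp
  then show ?thesis
    by (simp add: k_def d_def)
qed

lemma closest_point_translate_inner_le:
  assumes "convex X" and "closed X" and "z \<in> X"
  shows "v \<bullet> (z - closest_point X (a + v))
           \<le> (closest_point X (a + v) - a) \<bullet> (z - closest_point X (a + v))"
  using closest_point_dot[OF assms, of "a + v"] by (simp add: algebra_simps)

lemma projected_gradient_step_ascent:
  fixes \<Phi> :: "'a::euclidean_space \<Rightarrow> real"
  assumes "convex X" and "closed X" and "a \<in> X" and "0 \<le> L" and "0 < \<eta>" and "\<eta> * L \<le> 1"
    and deriv: "\<And>y. y \<in> X \<Longrightarrow> (\<Phi> has_derivative (\<lambda>h. g y \<bullet> h)) (at y within X)"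
    and lip: "\<And>y z. y \<in> X \<Longrightarrow> z \<in> X \<Longrightarrow> norm (g y - g z) \<le> L * norm (y - z)"
  defines "b \<equiv> closest_point X (a + \<eta> *\<^sub>R g a)"
  shows "(norm (b - a))\<^sup>2 \<le> 2 * \<eta> * (\<Phi> b - \<Phi> a)"
proof -
  have "b \<in> X"
    using closest_point_in_set[OF assms(2)] assms(3) by (auto simp: b_def)
  have "(\<eta> *\<^sub>R g a) \<bullet> (a - b) \<le> (b - a) \<bullet> (a - b)"
    using closest_point_translate_inner_le[OF assms(1-3), where a=a and v="\<eta> *\<^sub>R g a"]
    by (simp add: b_def)
  then have "(norm (b - a))\<^sup>2 \<le> \<eta> * (g a \<bullet> (b - a))"
    by (simp add: power2_norm_eq_inner inner_commute algebra_simps)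
  also have "\<dots> \<le> \<eta> * (\<Phi> b - \<Phi> a + L / 2 * (norm (b - a))\<^sup>2)"
    using lipschitz_gradient_lower_bound[OF assms(1,3) \<open>b \<in> X\<close> assms(4) deriv lip] assms(5)
    by (intro mult_left_mono) auto
  also have "\<dots> \<le> \<eta> * (\<Phi> b - \<Phi> a) + (norm (b - a))\<^sup>2 / 2"
    using mult_right_mono[OF assms(6), of "(norm (b - a))\<^sup>2 / 2"] by (simp add: algebra_simps)
  finally show ?thesis
    by simp
qed

lemma projected_gradient_step_gap_bound:
  assumes "convex X" and "closed X" and "bounded X" and "a \<in> X" and "0 < \<eta>"
    and "norm (g a) \<le> G"
  defines "b \<equiv> closest_point X (a + \<eta> *\<^sub>R g a)"
  shows "gap (\<lambda>y. - g y + R y) X a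
           \<le> (diameter X + \<eta> * G) / \<eta> * norm (b - a) + diameter X * norm (R a)"
  unfolding gap_def
proof (rule cSUP_least)
  fix z assume "z \<in> X"
  have "b \<in> X"
    using closest_point_in_set[OF assms(2)] assms(4) by (auto simp: b_def)
  have diam: "norm (u - v) \<le> diameter X" if "u \<in> X" "v \<in> X" for u v
    using diameter_bounded_bound[OF assms(3) that] by (simp add: dist_norm)
  have "\<eta> * (g a \<bullet> (z - a)) = \<eta> * (g a \<bullet> (z - b)) + \<eta> * (g a \<bullet> (b - a))"
    by (simp add: algebra_simps)
  also have "\<dots> \<le> (b - a) \<bullet> (z - b) + \<eta> * (norm (g a) * norm (b - a))"
    using closest_point_translate_inner_le[OF assms(1,2) \<open>z \<in> X\<close>, where a=a and v="\<eta> *\<^sub>R g a"]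
      assms(5)
    by (intro add_mono mult_left_mono norm_cauchy_schwarz) (simp_all add: b_def)
  also have "\<dots> \<le> norm (b - a) * diameter X + \<eta> * (G * norm (b - a))"
    using diam[OF \<open>z \<in> X\<close> \<open>b \<in> X\<close>] assms(5,6)
    by (intro add_mono mult_left_mono mult_right_mono order_trans[OF norm_cauchy_schwarz]) auto
  finally have "g a \<bullet> (z - a) \<le> (diameter X + \<eta> * G) / \<eta> * norm (b - a)"
    using assms(5) by (simp add: field_simps)
  moreover have "R a \<bullet> (a - z) \<le> diameter X * norm (R a)"
    using order_trans[OF norm_cauchy_schwarz mult_left_mono[OF diam[OF assms(4) \<open>z \<in> X\<close>]]]
    by (simp add: mult.commute)
  ultimately show "(- g a + R a) \<bullet> (a - z)
      \<le> (diameter X + \<eta> * G) / \<eta> * norm (b - a) + diameter X * norm (R a)"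
    by (simp add: algebra_simps)
qed (use assms(4) in auto)

lemma mean_le_sqrt_mean_squares:
  fixes f :: "'b \<Rightarrow> real"
  assumes "finite A" and "A \<noteq> {}"
  shows "(\<Sum>t\<in>A. f t) / card A \<le> sqrt ((\<Sum>t\<in>A. (f t)\<^sup>2) / card A)"
proof -
  have "((\<Sum>t\<in>A. f t) / card A)\<^sup>2 = (\<Sum>t\<in>A. f t)\<^sup>2 / (card A)\<^sup>2"
    by (simp add: power_divide)
  also have "\<dots> \<le> (\<Sum>t\<in>A. (f t)\<^sup>2) * card A / (card A)\<^sup>2"
    by (intro divide_right_mono sum_squared_le_sum_of_squares) simp
  also have "\<dots> = (\<Sum>t\<in>A. (f t)\<^sup>2) / card A"
    using assms by (simp add: power2_eq_square)
  finally show ?thesis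
    by (simp add: real_le_rsqrt)
qed

lemma closest_point_iterates_in:
  assumes "closed X" and "x 0 \<in> X" and "\<And>t. t < T \<Longrightarrow> x (Suc t) = closest_point X (y t)"
    and "t \<le> T"
  shows "x t \<in> X"
  using assms(4)
proof (induction t)
  case (Suc t)
  then show ?case
    using assms(2,3) closest_point_in_set[OF assms(1)] by auto
qed (use assms(2) in simp)

lemma projected_gradient_ascent_sum_squared_steps:
  fixes \<Phi> :: "'a::euclidean_space \<Rightarrow> real"
  assumes "convex X" and "closed X" and "0 \<le> L" and "0 < \<eta>" and "\<eta> * L \<le> 1"
    and deriv: "\<And>y. y \<in> X \<Longrightarrow> (\<Phi> has_derivative (\<lambda>h. g y \<bullet> h)) (at y within X)"
    and lip: "\<And>y z. y \<in> X \<Longrightarrow> z \<in> X \<Longrightarrow> norm (g y - g z) \<le> L * norm (y - z)"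
    and "x 0 \<in> X" and iter: "\<And>t. t < T \<Longrightarrow> x (Suc t) = closest_point X (x t + \<eta> *\<^sub>R g (x t))"
  shows "(\<Sum>t<T. (norm (x (Suc t) - x t))\<^sup>2) \<le> 2 * \<eta> * (\<Phi> (x T) - \<Phi> (x 0))"
proof -
  have "(\<Sum>t<T. (norm (x (Suc t) - x t))\<^sup>2) \<le> (\<Sum>t<T. 2 * \<eta> * (\<Phi> (x (Suc t)) - \<Phi> (x t)))"
  proof (rule sum_mono)
    fix t assume "t \<in> {..<T}"
    then show "(norm (x (Suc t) - x t))\<^sup>2 \<le> 2 * \<eta> * (\<Phi> (x (Suc t)) - \<Phi> (x t))"
      using projected_gradient_step_ascent[OF assms(1,2) _ assms(3-5) deriv lip]
        closest_point_iterates_in[OF assms(2,8) iter] iter by simp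
  qed
  also have "\<dots> = 2 * \<eta> * (\<Phi> (x T) - \<Phi> (x 0))"
    using sum_lessThan_telescope[of "\<lambda>t. \<Phi> (x t)" T] by (simp add: sum_distrib_left[symmetric])
  finally show ?thesis .
qed

lemma compact_continuous_le_SUP:
  fixes f :: "'a::topological_space \<Rightarrow> real"
  assumes "compact X" and "continuous_on X f" and "y \<in> X"
  shows "f y \<le> (SUP z\<in>X. f z)"
  using compact_imp_bounded[OF compact_continuous_image[OF assms(2,1)]] assms(3)
  by (intro cSUP_upper bounded_imp_bdd_above)

lemma compact_continuous_INF_le:
  fixes f :: "'a::topological_space \<Rightarrow> real"
  assumes "compact X" and "continuous_on X f" and "y \<in> X"
  shows "(INF z\<in>X. f z) \<le> f y"
  using compact_imp_bounded[OF compact_continuous_image[OF assms(2,1)]] assms(3)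
  by (intro cINF_lower bounded_imp_bdd_below)

lemma uniform_expectation_le_sqrt_bound:
  fixes a s r :: "nat \<Rightarrow> real"
  assumes "0 < T" and "0 \<le> c" and "0 \<le> D"
    and pointwise: "\<And>t. t < T \<Longrightarrow> a t \<le> c * s t + D * r t"
    and squares: "(\<Sum>t<T. (s t)\<^sup>2) \<le> S"
  shows "measure_pmf.expectation (pmf_of_set {..<T}) a
           \<le> c * sqrt (S / T) + D * sqrt (measure_pmf.expectation (pmf_of_set {..<T}) (\<lambda>t. (r t)\<^sup>2))"
proof -
  have E: "measure_pmf.expectation (pmf_of_set {..<T}) f = (\<Sum>t<T. f t) / T" for f :: "nat \<Rightarrow> real"
    using integral_pmf_of_set[of "{..<T}" f] assms(1) by auto
  have "(\<Sum>t<T. a t) / T \<le> (\<Sum>t<T. c * s t + D * r t) / T"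
    using pointwise by (auto intro!: divide_right_mono sum_mono)
  also have "\<dots> = c * ((\<Sum>t<T. s t) / T) + D * ((\<Sum>t<T. r t) / T)"
    by (simp add: sum.distrib sum_distrib_left add_divide_distrib)
  also have "\<dots> \<le> c * sqrt ((\<Sum>t<T. (s t)\<^sup>2) / T) + D * sqrt ((\<Sum>t<T. (r t)\<^sup>2) / T)"
    using mean_le_sqrt_mean_squares[of "{..<T}"] assms(1-3) by (intro add_mono mult_left_mono) auto
  also have "\<dots> \<le> c * sqrt (S / T) + D * sqrt ((\<Sum>t<T. (r t)\<^sup>2) / T)"
    using squares assms(2,3) by (intro add_mono mult_left_mono real_sqrt_le_mono divide_right_mono) auto
  finally show ?thesis
    unfolding E .
qed

lemma projected_gradient_ascent_expected_gap:
  fixes X :: "'a::euclidean_space set" and \<Phi> :: "'a \<Rightarrow> real" and g R :: "'a \<Rightarrow> 'a"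
    and x :: "nat \<Rightarrow> 'a"
  assumes "convex X" and "closed X" and "bounded X" and "0 \<le> L" and "0 < \<eta>" and "\<eta> * L \<le> 1"
    and "0 < T"
    and deriv: "\<And>y. y \<in> X \<Longrightarrow> (\<Phi> has_derivative (\<lambda>h. g y \<bullet> h)) (at y within X)"
    and lip: "\<And>y z. y \<in> X \<Longrightarrow> z \<in> X \<Longrightarrow> norm (g y - g z) \<le> L * norm (y - z)"
    and G: "\<And>y. y \<in> X \<Longrightarrow> norm (g y) \<le> G"
    and \<Delta>: "\<And>y z. y \<in> X \<Longrightarrow> z \<in> X \<Longrightarrow> \<Phi> y - \<Phi> z \<le> \<Delta>"
    and "x 0 \<in> X" and iter: "\<And>t. t < T \<Longrightarrow> x (Suc t) = closest_point X (x t + \<eta> *\<^sub>R g (x t))"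
  shows "measure_pmf.expectation (pmf_of_set {..<T}) (\<lambda>t. gap (\<lambda>y. - g y + R y) X (x t))
           \<le> (diameter X + \<eta> * G) / \<eta> * sqrt (2 * \<eta> * \<Delta> / T)
             + diameter X * sqrt (measure_pmf.expectation (pmf_of_set {..<T}) (\<lambda>t. (norm (R (x t)))\<^sup>2))"
proof (rule uniform_expectation_le_sqrt_bound)
  have x_in: "x t \<in> X" if "t \<le> T" for t
    by (rule closest_point_iterates_in[where y="\<lambda>t. x t + \<eta> *\<^sub>R g (x t)"])
      (use assms(2,12) iter that in auto)
  show "0 \<le> (diameter X + \<eta> * G) / \<eta>"
    using diameter_ge_0[OF assms(3)] order_trans[OF norm_ge_zero G[OF assms(12)]] assms(5) by simp
  show "0 \<le> diameter X"
    using diameter_ge_0[OF assms(3)] .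
  show "gap (\<lambda>y. - g y + R y) X (x t)
      \<le> (diameter X + \<eta> * G) / \<eta> * norm (x (Suc t) - x t) + diameter X * norm (R (x t))"
    if "t < T" for t
    using projected_gradient_step_gap_bound[where g=g, OF assms(1-3) x_in assms(5) G[OF x_in], of t]
      that iter by simp
  have "2 * \<eta> * (\<Phi> (x T) - \<Phi> (x 0)) \<le> 2 * \<eta> * \<Delta>"
    using \<Delta>[OF x_in x_in, of T 0] assms(5) by simp
  then show "(\<Sum>t<T. (norm (x (Suc t) - x t))\<^sup>2) \<le> 2 * \<eta> * \<Delta>"
    using projected_gradient_ascent_sum_squared_steps[where x=x and T=T,
        OF assms(1,2,4-6) deriv lip assms(12) iter] by linarith
qed (fact assms(7))

theorem theoremF3:
  fixes X :: "'a::euclidean_space set"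
    and \<Phi> :: "'a \<Rightarrow> real" and g :: "'a \<Rightarrow> 'a" and R :: "'a \<Rightarrow> 'a"
    and L \<eta> :: real and T :: nat and x :: "nat \<Rightarrow> 'a" and x0 :: 'a
  assumes "X \<noteq> {}" and "closed X" and "convex X" and "compact X"
    and deriv: "\<And>y. y \<in> X \<Longrightarrow> (\<Phi> has_derivative (\<lambda>h. g y \<bullet> h)) (at y within X)"
    and "0 \<le> L"
    and lip: "\<And>y z. y \<in> X \<Longrightarrow> z \<in> X \<Longrightarrow> norm (g y - g z) \<le> L * norm (y - z)"
    and "0 < \<eta>" and "\<eta> * L \<le> 1"
    and "0 < T"
    and "x0 \<in> X"
    and "x 0 = x0"
    and "\<And>t. t < T \<Longrightarrow> x (Suc t) = closest_point X (x t + \<eta> *\<^sub>R g (x t))"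
  shows "measure_pmf.expectation (pmf_of_set {..<T}) (\<lambda>t. gap (\<lambda>y. - g y + R y) X (x t))
         \<le> (diameter X + \<eta> * (SUP y\<in>X. norm (g y)))
             * sqrt (2 * ((SUP y\<in>X. \<Phi> y) - (INF y\<in>X. \<Phi> y)) / (real T * \<eta>))
           + diameter X * sqrt (measure_pmf.expectation (pmf_of_set {..<T}) (\<lambda>t. (norm (R (x t)))\<^sup>2))"
proof -
  have "continuous_on X g"
    using lip assms(6) by (intro lipschitz_on_continuous_on) (auto simp: lipschitz_on_def dist_norm)
  then have G: "norm (g y) \<le> (SUP y\<in>X. norm (g y))" if "y \<in> X" for y
    by (intro compact_continuous_le_SUP that assms(4) continuous_on_norm)
  have "continuous_on X \<Phi>"
    using deriv has_derivative_continuous continuous_on_eq_continuous_within by blast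
  then have \<Delta>: "\<Phi> y - \<Phi> z \<le> (SUP y\<in>X. \<Phi> y) - (INF y\<in>X. \<Phi> y)" if "y \<in> X" "z \<in> X" for y z
    using that assms(4) by (intro diff_mono compact_continuous_le_SUP compact_continuous_INF_le)
  have rescale: "a / \<eta> * sqrt (2 * \<eta> * \<Delta> / T) = a * sqrt (2 * \<Delta> / (T * \<eta>))" for a \<Delta>
  proof -
    have "2 * \<eta> * \<Delta> / T = \<eta>\<^sup>2 * (2 * \<Delta> / (T * \<eta>))"
      using assms(8) by (simp add: field_simps power2_eq_square)
    then have "sqrt (2 * \<eta> * \<Delta> / T) = \<eta> * sqrt (2 * \<Delta> / (T * \<eta>))"
      using assms(8) by (simp only: real_sqrt_mult real_sqrt_abs abs_of_pos)
    then show ?thesis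
      using assms(8) by simp
  qed
  have "x 0 \<in> X"
    using assms(11,12) by simp
  from projected_gradient_ascent_expected_gap[where R=R and x=x and T=T,
      OF assms(3,2) compact_imp_bounded[OF assms(4)] assms(6,8-10) deriv lip G \<Delta> this assms(13)]
  show ?thesis
    unfolding rescale .
qed

end
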